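(* Let $\mathscr{X}$ be a complex Banach space and let $\mathscr{M},\mathscr{N}$ be closed subspaces with $\mathscr{M}\cap\mathscr{N}=\{0\}$ and $\mathscr{M}+\mathscr{N}=\mathscr{X}$. Then $\mathscr{M}$ and $\mathscr{N}$ are isomorphic (as Banach spaces) if and only if there exists a closed subspace $\mathscr{K}\subseteq\mathscr{X}$, distinct from both $\mathscr{M}$ and $\mathscr{N}$, such that $\mathscr{M}\cap\mathscr{K}=\{0\}$, $\mathscr{M}+\mathscr{K}=\mathscr{X}$, $\mathscr{N}\cap\mathscr{K}=\{0\}$, and $\mathscr{N}+\mathscr{K}=\mathscr{X}$. In that case $\mathscr{K}$ is isomorphic to $\mathscr{M}$ and to $\mathscr{N}$. *)

theory Defs
  imports "HOL-Analysis.Analysis"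
begin

text \<open>A complex Banach space is modelled
as a real Banach space (type class banach) together with a complex structure J
(multiplication by the imaginary unit): complex scalar multiplication is
(a + b i) x = a x + b J x, and the norm must be complex-homogeneous.\<close>

definition scaleC :: "('a::real_vector \<Rightarrow> 'a) \<Rightarrow> complex \<Rightarrow> 'a \<Rightarrow> 'a" where
  "scaleC J c x = Re c *\<^sub>R x + Im c *\<^sub>R J x"

definition complex_banach_structure :: "('a::banach \<Rightarrow> 'a) \<Rightarrow> bool" where
  "complex_banach_structure J \<longleftrightarrow>
     linear J \<and> (\<forall>x. J (J x) = - x) \<and> (\<forall>c x. norm (scaleC J c x) = cmod c * norm x)"

definition csubspace :: "('a::real_vector \<Rightarrow> 'a) \<Rightarrow> 'a set \<Rightarrow> bool" where
  "csubspace J S \<longleftrightarrow> 0 \<in> S \<and> (\<forall>x\<in>S. \<forall>y\<in>S. x + y \<in> S) \<and> (\<forall>c. \<forall>x\<in>S. scaleC J c x \<in> S)"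

definition cisomorphic :: "('a::real_normed_vector \<Rightarrow> 'a) \<Rightarrow> 'a set \<Rightarrow> 'a set \<Rightarrow> bool" where
  "cisomorphic J M N \<longleftrightarrow> (\<exists>T. bij_betw T M N
     \<and> (\<forall>x\<in>M. \<forall>y\<in>M. T (x + y) = T x + T y)
     \<and> (\<forall>c. \<forall>x\<in>M. T (scaleC J c x) = scaleC J c (T x))
     \<and> (\<exists>C. \<forall>x\<in>M. norm (T x) \<le> C * norm x)
     \<and> (\<exists>D. \<forall>x\<in>M. norm x \<le> D * norm (T x)))"

definition complementary :: "'a::real_vector set \<Rightarrow> 'a set \<Rightarrow> bool" where
  "complementary M N \<longleftrightarrow> M \<inter> N = {0} \<and> {m + n | m n. m \<in> M \<and> n \<in> N} = UNIV"

end

theory Submission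
  imports Defs
begin

text \<open>If \<open>T : M \<rightarrow> N\<close> is an isomorphism, its graph \<open>{m + T m | m \<in> M}\<close> is a common complement
of \<open>M\<close> and \<open>N\<close>; it is closed, being the zero set of the continuous map \<open>x \<mapsto> T (P x) - (x - P x)\<close>,
where \<open>P\<close> is the projection onto \<open>M\<close> along \<open>N\<close>. Conversely, if \<open>A\<close> and \<open>K\<close> are both
complements of \<open>B\<close>, the projection onto \<open>A\<close> along \<open>B\<close>, restricted to \<open>K\<close>, is inverted by the
projection onto \<open>K\<close> along \<open>B\<close>. All these projections are bounded by the open mapping theorem,
applied to the sum map \<open>(a, b) \<mapsto> a + b\<close> on the closed subspace \<open>A \<times> B\<close> of the product space.\<close>

section \<open>The open mapping theorem on a closed subspace\<close>

lemma Baire_closed_cover_interior: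
  fixes F :: "nat \<Rightarrow> 'a::banach set"
  assumes "\<And>k. closed (F k)" and "(\<Union>k. F k) = UNIV"
  obtains k where "interior (F k) \<noteq> {}"
proof -
  have "euclidean interior_of \<Union>(range F) \<noteq> {}"
    using assms(2) by simp
  then show thesis
    using assms(1) that Baire_category_alt[of euclidean "range F"]
    by (auto simp: completely_metrizable_space_euclidean closed_closedin[symmetric])
qed

lemma closure_image_ballE:
  fixes f :: "'a::real_normed_vector \<Rightarrow> 'b::real_normed_vector"
  assumes "y \<in> closure (f ` (S \<inter> ball 0 t))" "e > 0"
  obtains x where "x \<in> S" "norm x < t" "dist (f x) y < e"
  using assms unfolding closure_approachable by auto

lemma closure_image_ball_scaleR:
  fixes f :: "'a::real_normed_vector \<Rightarrow> 'b::real_normed_vector"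
  assumes "linear f" "subspace S" "r > 0" and y: "y \<in> closure (f ` (S \<inter> ball 0 \<rho>))"
  shows "r *\<^sub>R y \<in> closure (f ` (S \<inter> ball 0 (r * \<rho>)))"
  unfolding closure_approachable
proof (intro allI impI)
  fix e :: real assume "e > 0"
  then have "e / r > 0"
    using \<open>r > 0\<close> by simp
  obtain x where x: "x \<in> S" "norm x < \<rho>" "dist (f x) y < e / r"
    using y \<open>e / r > 0\<close> by (rule closure_image_ballE)
  have "r *\<^sub>R x \<in> S \<inter> ball 0 (r * \<rho>)"
    using x assms(2,3) by (simp add: subspace_scale)
  then have "f (r *\<^sub>R x) \<in> f ` (S \<inter> ball 0 (r * \<rho>))"
    by blast
  moreover have "dist (f (r *\<^sub>R x)) (r *\<^sub>R y) = r * dist (f x) y"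
    using assms(1) \<open>r > 0\<close> by (simp add: linear_scale dist_norm flip: scaleR_diff_right)
  moreover have "r * dist (f x) y < e"
    using x \<open>r > 0\<close> by (simp add: field_simps)
  ultimately show "\<exists>z \<in> f ` (S \<inter> ball 0 (r * \<rho>)). dist z (r *\<^sub>R y) < e"
    by metis
qed

lemma closure_image_ball_diff:
  fixes f :: "'a::real_normed_vector \<Rightarrow> 'b::real_normed_vector"
  assumes "linear f" "subspace S"
    and u: "u \<in> closure (f ` (S \<inter> ball 0 \<rho>))" and v: "v \<in> closure (f ` (S \<inter> ball 0 \<rho>))"
  shows "u - v \<in> closure (f ` (S \<inter> ball 0 (2 * \<rho>)))"
  unfolding closure_approachable
proof (intro allI impI)
  fix e :: real assume "e > 0"
  then have "e / 2 > 0"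
    by simp
  obtain x where x: "x \<in> S" "norm x < \<rho>" "dist (f x) u < e / 2"
    using u \<open>e / 2 > 0\<close> by (rule closure_image_ballE)
  obtain y where y: "y \<in> S" "norm y < \<rho>" "dist (f y) v < e / 2"
    using v \<open>e / 2 > 0\<close> by (rule closure_image_ballE)
  have "x - y \<in> S \<inter> ball 0 (2 * \<rho>)"
    using x y assms(2) norm_triangle_ineq4[of x y] by (simp add: subspace_diff)
  then have "f (x - y) \<in> f ` (S \<inter> ball 0 (2 * \<rho>))"
    by blast
  moreover have "dist (f (x - y)) (u - v) < e"
    using dist_triangle_add_half[of "f x" u e "- f y" "- v"] x y assms(1)
    by (simp add: linear_diff dist_minus)
  ultimately show "\<exists>z \<in> f ` (S \<inter> ball 0 (2 * \<rho>)). dist z (u - v) < e"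
    by blast
qed

lemma Baire_closure_image_ball:
  fixes f :: "'a::real_normed_vector \<Rightarrow> 'b::banach"
  assumes "f ` S = UNIV"
  obtains y \<epsilon> k where "\<epsilon> > 0" "ball y \<epsilon> \<subseteq> closure (f ` (S \<inter> ball 0 (real (Suc k))))"
proof -
  define F where "F k = closure (f ` (S \<inter> ball 0 (real (Suc k))))" for k
  have "y \<in> (\<Union>k. F k)" for y
  proof -
    obtain x where "x \<in> S" "y = f x"
      using assms by blast
    moreover obtain k where "norm x < real k"
      using reals_Archimedean2 by blast
    ultimately have "x \<in> S \<inter> ball 0 (real (Suc k))"
      by simp
    then have "y \<in> f ` (S \<inter> ball 0 (real (Suc k)))"
      using \<open>y = f x\<close> by (rule rev_image_eqI)
    then have "y \<in> F k"
      unfolding F_def by (rule closure_subset[THEN subsetD])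
    then show ?thesis
      by (rule UN_I[OF UNIV_I])
  qed
  moreover have "closed (F k)" for k
    by (simp add: F_def)
  ultimately obtain k where "interior (F k) \<noteq> {}"
    using Baire_closed_cover_interior[of F] by blast
  then show thesis
    using that by (auto simp: mem_interior F_def)
qed

lemma open_mapping_approx:
  fixes f :: "'a::real_normed_vector \<Rightarrow> 'b::banach"
  assumes "linear f" "subspace S" "f ` S = UNIV"
  obtains \<delta> where "\<delta> > 0"
    and "\<And>t y. t > 0 \<Longrightarrow> norm y < \<delta> * t \<Longrightarrow> y \<in> closure (f ` (S \<inter> ball 0 t))"
proof -
  obtain y \<epsilon> k where "\<epsilon> > 0" and ball: "ball y \<epsilon> \<subseteq> closure (f ` (S \<inter> ball 0 (real (Suc k))))"
    using Baire_closure_image_ball[OF assms(3)] by blast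
  define \<rho> where "\<rho> = 2 * real (Suc k)"
  have near0: "z \<in> closure (f ` (S \<inter> ball 0 \<rho>))" if "norm z < \<epsilon>" for z
  proof -
    have "y + z \<in> ball y \<epsilon>" "y \<in> ball y \<epsilon>"
      using that \<open>\<epsilon> > 0\<close> by (simp_all add: dist_norm)
    then have "(y + z) - y \<in> closure (f ` (S \<inter> ball 0 \<rho>))"
      unfolding \<rho>_def using ball by (intro closure_image_ball_diff[OF assms(1,2)]) blast+
    then show ?thesis
      by simp
  qed
  show thesis
  proof
    show "\<epsilon> / \<rho> > 0"
      using \<open>\<epsilon> > 0\<close> by (simp add: \<rho>_def)
  next
    fix t and z :: 'b assume "t > 0" and z: "norm z < \<epsilon> / \<rho> * t"
    define r where "r = t / \<rho>"
    have "r > 0" and "r * \<rho> = t" and "\<epsilon> / \<rho> * t = \<epsilon> * r"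
      using \<open>t > 0\<close> by (simp_all add: r_def \<rho>_def)
    have "norm (z /\<^sub>R r) = norm z / r"
      using \<open>r > 0\<close> by (simp add: divide_inverse_commute)
    also have "\<dots> < \<epsilon>"
      using z \<open>r > 0\<close> \<open>\<epsilon> / \<rho> * t = \<epsilon> * r\<close> by (simp add: pos_divide_less_eq)
    finally have "r *\<^sub>R (z /\<^sub>R r) \<in> closure (f ` (S \<inter> ball 0 (r * \<rho>)))"
      by (intro closure_image_ball_scaleR[OF assms(1,2) \<open>r > 0\<close>] near0)
    then show "z \<in> closure (f ` (S \<inter> ball 0 t))"
      using \<open>r > 0\<close> \<open>r * \<rho> = t\<close> by simp
  qed
qed

lemma open_mapping_series:
  fixes f :: "'a::real_normed_vector \<Rightarrow> 'b::real_normed_vector"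
  assumes "linear f" "\<delta> > 0"
    and approx: "\<And>t y. t > 0 \<Longrightarrow> norm y < \<delta> * t \<Longrightarrow> y \<in> closure (f ` (S \<inter> ball 0 t))"
    and "norm y < \<delta>"
  obtains x where "\<And>n. x n \<in> S" "\<And>n. norm (x n) < (1/2)^n" "(\<lambda>n. f (\<Sum>j<n. x j)) \<longlonglongrightarrow> y"
proof -
  have step: "\<exists>x. x \<in> S \<and> norm x < (1/2)^n \<and> norm (r - f x) < \<delta> * (1/2)^Suc n"
    if "norm r < \<delta> * (1/2)^n" for n r
  proof -
    have "r \<in> closure (f ` (S \<inter> ball 0 ((1/2)^n)))"
      using approx that by simp
    moreover have "\<delta> * (1/2)^Suc n > 0"
      using \<open>\<delta> > 0\<close> by simp
    ultimately obtain x where "x \<in> S" "norm x < (1/2)^n" "dist (f x) r < \<delta> * (1/2)^Suc n"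
      by (rule closure_image_ballE)
    then show ?thesis
      by (auto simp: dist_norm norm_minus_commute)
  qed
  define g where "g n r = (SOME x. x \<in> S \<and> norm x < (1/2)^n \<and> norm (r - f x) < \<delta> * (1/2)^Suc n)"
    for n r
  have g: "g n r \<in> S \<and> norm (g n r) < (1/2)^n \<and> norm (r - f (g n r)) < \<delta> * (1/2)^Suc n"
    if "norm r < \<delta> * (1/2)^n" for n r
    unfolding g_def using step[OF that] by (rule someI_ex)
  define res where "res = rec_nat y (\<lambda>n r. r - f (g n r))"
  have res_0: "res 0 = y" and res_Suc: "res (Suc n) = res n - f (g n (res n))" for n
    by (simp_all add: res_def)
  have res_small: "norm (res n) < \<delta> * (1/2)^n" for n
  proof (induction n)
    case 0
    then show ?case
      using \<open>norm y < \<delta>\<close> by (simp add: res_0)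
  next
    case (Suc n)
    then show ?case
      using g[OF Suc] by (simp add: res_Suc)
  qed
  define x where "x n = g n (res n)" for n
  have partial: "f (\<Sum>j<n. x j) = y - res n" for n
    by (induction n) (simp_all add: res_0 res_Suc x_def linear_add linear_0 \<open>linear f\<close>)
  have "res \<longlonglongrightarrow> 0"
  proof (rule Lim_null_comparison)
    show "\<forall>\<^sub>F n in sequentially. norm (res n) \<le> \<delta> * (1/2)^n"
      using res_small by (simp add: less_imp_le)
    show "(\<lambda>n. \<delta> * (1/2::real)^n) \<longlonglongrightarrow> 0"
      by (intro tendsto_mult_right_zero LIMSEQ_realpow_zero) simp_all
  qed
  then have "(\<lambda>n. f (\<Sum>j<n. x j)) \<longlonglongrightarrow> y"
    unfolding partial using tendsto_diff[OF tendsto_const] by fastforce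
  moreover have "x n \<in> S" "norm (x n) < (1/2)^n" for n
    using g[OF res_small] by (simp_all add: x_def)
  ultimately show thesis
    using that by blast
qed

lemma open_mapping_exact:
  fixes f :: "'a::banach \<Rightarrow> 'b::real_normed_vector"
  assumes f: "bounded_linear f" and "closed S" "subspace S" "\<delta> > 0"
    and approx: "\<And>t y. t > 0 \<Longrightarrow> norm y < \<delta> * t \<Longrightarrow> y \<in> closure (f ` (S \<inter> ball 0 t))"
    and "norm y < \<delta>"
  shows "\<exists>x\<in>S. f x = y \<and> norm x \<le> 2"
proof -
  obtain x where x_mem: "\<And>n. x n \<in> S" and x_small: "\<And>n. norm (x n) < (1/2)^n"
    and partial: "(\<lambda>n. f (\<Sum>j<n. x j)) \<longlonglongrightarrow> y"
    using open_mapping_series[OF bounded_linear.linear[OF f] \<open>\<delta> > 0\<close> approx \<open>norm y < \<delta>\<close>] by blast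
  have geom: "summable (\<lambda>n. (1/2::real)^n)"
    by (simp add: summable_geometric)
  have norm_summable: "summable (\<lambda>n. norm (x n))"
    by (rule summable_comparison_test'[OF geom]) (use x_small in \<open>simp add: less_imp_le\<close>)
  then have "summable x"
    by (rule summable_norm_cancel)
  have "(\<lambda>n. f (\<Sum>j<n. x j)) \<longlonglongrightarrow> f (suminf x)"
    by (intro bounded_linear.tendsto[OF f] summable_LIMSEQ \<open>summable x\<close>)
  then have "f (suminf x) = y"
    using partial LIMSEQ_unique by blast
  moreover have "suminf x \<in> S"
    by (rule closed_sequentially[OF \<open>closed S\<close> _ summable_LIMSEQ[OF \<open>summable x\<close>]])
      (simp add: subspace_sum[OF \<open>subspace S\<close>] x_mem)
  moreover have "norm (suminf x) \<le> 2"
  proof -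
    have "norm (suminf x) \<le> (\<Sum>n. norm (x n))"
      by (rule summable_norm[OF norm_summable])
    also have "\<dots> \<le> (\<Sum>n. (1/2::real)^n)"
      by (rule suminf_le[OF _ norm_summable geom]) (simp add: x_small less_imp_le)
    also have "\<dots> = 2"
      by (simp add: suminf_geometric)
    finally show ?thesis .
  qed
  ultimately show ?thesis
    by blast
qed

theorem open_mapping_subspace:
  fixes f :: "'a::banach \<Rightarrow> 'b::banach"
  assumes f: "bounded_linear f" and "closed S" "subspace S" "f ` S = UNIV"
  obtains C where "\<And>y. \<exists>x\<in>S. f x = y \<and> norm x \<le> C * norm y"
proof -
  have lin: "linear f"
    using f by (rule bounded_linear.linear)
  obtain \<delta> where "\<delta> > 0"
    and approx: "\<And>t y. t > 0 \<Longrightarrow> norm y < \<delta> * t \<Longrightarrow> y \<in> closure (f ` (S \<inter> ball 0 t))"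
    using open_mapping_approx[OF lin \<open>subspace S\<close> \<open>f ` S = UNIV\<close>] by blast
  have "\<exists>x\<in>S. f x = y \<and> norm x \<le> 4 / \<delta> * norm y" for y
  proof (cases "y = 0")
    case True
    then show ?thesis
      using \<open>subspace S\<close> lin by (auto simp: subspace_0 linear_0)
  next
    case False
    define s where "s = \<delta> / (2 * norm y)"
    have "s > 0"
      using False \<open>\<delta> > 0\<close> by (simp add: s_def)
    have "norm (s *\<^sub>R y) < \<delta>"
      using False \<open>\<delta> > 0\<close> by (simp add: s_def)
    then obtain x where "x \<in> S" "f x = s *\<^sub>R y" "norm x \<le> 2"
      using open_mapping_exact[OF f \<open>closed S\<close> \<open>subspace S\<close> \<open>\<delta> > 0\<close> approx] by blast
    have "x /\<^sub>R s \<in> S"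
      using \<open>subspace S\<close> \<open>x \<in> S\<close> by (simp add: subspace_scale)
    moreover have "f (x /\<^sub>R s) = y"
      using lin \<open>f x = s *\<^sub>R y\<close> \<open>s > 0\<close> by (simp add: linear_scale)
    moreover have "norm (x /\<^sub>R s) = norm x / s"
      using \<open>s > 0\<close> by (simp add: divide_inverse_commute)
    moreover have "norm x / s \<le> 4 / \<delta> * norm y"
      using \<open>norm x \<le> 2\<close> \<open>s > 0\<close> False by (simp add: s_def field_simps)
    ultimately show ?thesis
      by metis
  qed
  then show thesis
    using that by blast
qed

section \<open>Complements and projections\<close>

lemma scaleC_of_real [simp]: "scaleC J (complex_of_real r) x = r *\<^sub>R x"
  by (simp add: scaleC_def)

lemma scaleC_add: "linear J \<Longrightarrow> scaleC J c (x + y) = scaleC J c x + scaleC J c y"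
  by (simp add: scaleC_def linear_add scaleR_add_right)

lemma scaleC_diff: "linear J \<Longrightarrow> scaleC J c (x - y) = scaleC J c x - scaleC J c y"
  by (simp add: scaleC_def linear_diff scaleR_diff_right)

lemma csubspace_imp_subspace:
  assumes "csubspace J S"
  shows "subspace S"
  unfolding subspace_def
proof (intro conjI ballI allI)
  fix r x assume "x \<in> S"
  then have "scaleC J (complex_of_real r) x \<in> S"
    using assms unfolding csubspace_def by blast
  then show "r *\<^sub>R x \<in> S"
    by simp
qed (use assms in \<open>simp_all add: csubspace_def\<close>)

lemma complementaryI:
  assumes "0 \<in> A" "0 \<in> B" "\<And>z. z \<in> A \<Longrightarrow> z \<in> B \<Longrightarrow> z = 0" "\<And>x. \<exists>a\<in>A. \<exists>b\<in>B. x = a + b"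
  shows "complementary A B"
  unfolding complementary_def using assms by fastforce

lemma complementary_sym:
  assumes "complementary A B"
  shows "complementary B A"
proof -
  have "x \<in> {b + a | b a. b \<in> B \<and> a \<in> A}" for x
  proof -
    have "x \<in> {a + b | a b. a \<in> A \<and> b \<in> B}"
      using assms unfolding complementary_def by blast
    then obtain a b where "a \<in> A" "b \<in> B" "x = b + a"
      by (auto simp: add.commute)
    then show ?thesis
      by blast
  qed
  then show ?thesis
    using assms unfolding complementary_def by (auto simp: Int_commute)
qed

lemma complementary_equicard_nonzero:
  fixes M N :: "'a::real_vector set"
  assumes "complementary M N" "card M = card N" "(UNIV :: 'a set) \<noteq> {0}"
  shows "M \<noteq> {0}"
proof
  assume "M = {0}"
  then have "N = UNIV"
    using assms(1) unfolding complementary_def by auto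
  then have "card (UNIV :: 'a set) = 1"
    using assms(2) \<open>M = {0}\<close> by simp
  then obtain x where "(UNIV :: 'a set) = {x}"
    by (rule card_1_singletonE)
  moreover have "x = 0"
    using calculation by (metis UNIV_I singletonD)
  ultimately show False
    using assms(3) by simp
qed

lemma complementary_bounded_decomposition:
  fixes A B :: "'a::banach set"
  assumes "closed A" "closed B" "subspace A" "subspace B" "complementary A B"
  obtains C where "\<And>x. \<exists>a\<in>A. \<exists>b\<in>B. x = a + b \<and> norm a \<le> C * norm x"
proof -
  define \<sigma> where "\<sigma> p = fst p + snd p" for p :: "'a \<times> 'a"
  have "bounded_linear \<sigma>"
    unfolding \<sigma>_def by (intro bounded_linear_add bounded_linear_fst bounded_linear_snd)
  moreover have "closed (A \<times> B)" "subspace (A \<times> B)"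
    using assms by (simp_all add: closed_Times subspace_Times)
  moreover have "\<sigma> ` (A \<times> B) = UNIV"
  proof -
    have "x \<in> \<sigma> ` (A \<times> B)" for x
    proof -
      obtain a b where "a \<in> A" "b \<in> B" "x = a + b"
        using \<open>complementary A B\<close> unfolding complementary_def by blast
      then have "(a, b) \<in> A \<times> B" "x = \<sigma> (a, b)"
        by (simp_all add: \<sigma>_def)
      then show ?thesis
        by (rule rev_image_eqI)
    qed
    then show ?thesis
      by blast
  qed
  ultimately obtain C where C: "\<And>x. \<exists>p\<in>A \<times> B. \<sigma> p = x \<and> norm p \<le> C * norm x"
    using open_mapping_subspace by blast
  have "\<exists>a\<in>A. \<exists>b\<in>B. x = a + b \<and> norm a \<le> C * norm x" for x
  proof -
    obtain p where "p \<in> A \<times> B" "\<sigma> p = x" "norm p \<le> C * norm x"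
      using C[of x] by blast
    moreover obtain a b where "p = (a, b)"
      by (cases p)
    ultimately show ?thesis
      using norm_fst_le[of a b] by (auto simp: \<sigma>_def)
  qed
  then show thesis
    using that by blast
qed

definition proj_along :: "'a::real_vector set \<Rightarrow> 'a set \<Rightarrow> 'a \<Rightarrow> 'a" where
  "proj_along A B x = (THE a. a \<in> A \<and> x - a \<in> B)"

lemma proj_along_eqI:
  assumes "subspace A" "subspace B" "complementary A B" and "a \<in> A" "x - a \<in> B"
  shows "proj_along A B x = a"
  unfolding proj_along_def
proof (rule the_equality)
  show "a \<in> A \<and> x - a \<in> B"
    using assms by simp
next
  fix a' assume a': "a' \<in> A \<and> x - a' \<in> B"
  have "a' - a \<in> A"
    using assms(1,4) a' by (simp add: subspace_diff)
  moreover have "(x - a) - (x - a') \<in> B"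
    using a' by (intro subspace_diff[OF assms(2,5)]) simp
  ultimately have "a' - a \<in> A \<inter> B"
    by simp
  then have "a' - a = 0"
    using \<open>complementary A B\<close> unfolding complementary_def by blast
  then show "a' = a"
    by simp
qed

lemma proj_along:
  assumes "subspace A" "subspace B" "complementary A B"
  shows "proj_along A B x \<in> A" and "x - proj_along A B x \<in> B"
proof -
  obtain a b where "a \<in> A" "b \<in> B" "x = a + b"
    using \<open>complementary A B\<close> unfolding complementary_def by blast
  moreover from this have "proj_along A B x = a"
    by (intro proj_along_eqI assms) simp_all
  ultimately show "proj_along A B x \<in> A" "x - proj_along A B x \<in> B"
    by simp_all
qed

lemma linear_proj_along:
  assumes "subspace A" "subspace B" "complementary A B"
  shows "linear (proj_along A B)"
proof (rule linearI)
  note p = proj_along[OF assms]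
  fix x y
  have "(x - proj_along A B x) + (y - proj_along A B y) \<in> B"
    by (rule subspace_add[OF assms(2) p(2) p(2)])
  then have "(x + y) - (proj_along A B x + proj_along A B y) \<in> B"
    by (simp add: algebra_simps)
  then show "proj_along A B (x + y) = proj_along A B x + proj_along A B y"
    using assms p by (intro proj_along_eqI) (simp_all add: subspace_add)
next
  note p = proj_along[OF assms]
  fix r x
  have "r *\<^sub>R x - r *\<^sub>R proj_along A B x = r *\<^sub>R (x - proj_along A B x)"
    by (simp add: scaleR_diff_right)
  then show "proj_along A B (r *\<^sub>R x) = r *\<^sub>R proj_along A B x"
    using assms p by (intro proj_along_eqI) (simp_all add: subspace_scale)
qed

lemma bounded_linear_proj_along:
  fixes A B :: "'a::banach set"
  assumes "closed A" "closed B" "subspace A" "subspace B" "complementary A B"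
  shows "bounded_linear (proj_along A B)"
proof -
  obtain C where C: "\<And>x. \<exists>a\<in>A. \<exists>b\<in>B. x = a + b \<and> norm a \<le> C * norm x"
    using complementary_bounded_decomposition[OF assms] by blast
  have "norm (proj_along A B x) \<le> norm x * C" for x
  proof -
    obtain a b where "a \<in> A" "b \<in> B" "x = a + b" "norm a \<le> C * norm x"
      using C[of x] by blast
    moreover from this have "proj_along A B x = a"
      by (intro proj_along_eqI assms(3-5)) simp_all
    ultimately show ?thesis
      by (simp add: mult.commute)
  qed
  then show ?thesis
    using linear_proj_along[OF assms(3-5)] by (intro bounded_linear_intro) (simp_all add: linear_add linear_scale)
qed

lemma proj_along_scaleC:
  assumes "linear J" "csubspace J A" "csubspace J B" "complementary A B"
  shows "proj_along A B (scaleC J c x) = scaleC J c (proj_along A B x)"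
proof -
  have sub: "subspace A" "subspace B"
    using assms(2,3) by (simp_all add: csubspace_imp_subspace)
  note p = proj_along[OF sub assms(4)]
  have "scaleC J c x - scaleC J c (proj_along A B x) = scaleC J c (x - proj_along A B x)"
    using assms(1) by (simp add: scaleC_diff)
  then show ?thesis
    using assms(2,3) p by (intro proj_along_eqI sub assms(4)) (auto simp: csubspace_def)
qed

lemma cisomorphicI:
  assumes "bounded_linear T" "bounded_linear S"
    and "T ` K \<subseteq> A" "S ` A \<subseteq> K"
    and "\<And>k. k \<in> K \<Longrightarrow> S (T k) = k" "\<And>a. a \<in> A \<Longrightarrow> T (S a) = a"
    and "\<And>c k. k \<in> K \<Longrightarrow> T (scaleC J c k) = scaleC J c (T k)"
  shows "cisomorphic J K A"
proof -
  obtain CT where CT: "\<And>x. norm (T x) \<le> norm x * CT"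
    using bounded_linear.bounded[OF assms(1)] by blast
  obtain CS where CS: "\<And>x. norm (S x) \<le> norm x * CS"
    using bounded_linear.bounded[OF assms(2)] by blast
  have "bij_betw T K A"
    using assms(3-6) by (intro bij_betw_byWitness[where f' = S]) auto
  moreover have "\<forall>x\<in>K. \<forall>y\<in>K. T (x + y) = T x + T y"
    using assms(1) by (simp add: linear_add bounded_linear.linear)
  moreover have "\<forall>x\<in>K. norm (T x) \<le> CT * norm x"
    using CT by (simp add: mult.commute)
  moreover have "\<forall>x\<in>K. norm x \<le> CS * norm (T x)"
  proof
    fix x assume "x \<in> K"
    then have "norm x = norm (S (T x))"
      using assms(5) by simp
    also have "\<dots> \<le> CS * norm (T x)"
      using CS[of "T x"] by (simp add: mult.commute)
    finally show "norm x \<le> CS * norm (T x)" .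
  qed
  ultimately show ?thesis
    unfolding cisomorphic_def using assms(7) by blast
qed

lemma cisomorphic_common_complement:
  fixes A B K :: "'a::banach set"
  assumes "linear J"
    and "closed A" "closed B" "closed K"
    and "csubspace J A" "csubspace J B" "csubspace J K"
    and "complementary A B" "complementary K B"
  shows "cisomorphic J K A"
proof -
  have sub: "subspace A" "subspace B" "subspace K"
    using assms(5-7) by (simp_all add: csubspace_imp_subspace)
  note pA = proj_along[OF sub(1,2) assms(8)] and pK = proj_along[OF sub(3,2) assms(9)]
  show ?thesis
  proof (rule cisomorphicI)
    show "bounded_linear (proj_along A B)" "bounded_linear (proj_along K B)"
      using assms sub by (simp_all add: bounded_linear_proj_along)
    show "proj_along A B ` K \<subseteq> A" "proj_along K B ` A \<subseteq> K"
      using pA pK by auto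
  next
    fix k assume "k \<in> K"
    have "proj_along A B k - k \<in> B"
      using subspace_neg[OF sub(2) pA(2)[of k]] by simp
    then show "proj_along K B (proj_along A B k) = k"
      using \<open>k \<in> K\<close> sub assms(9) by (intro proj_along_eqI)
  next
    fix a assume "a \<in> A"
    have "proj_along K B a - a \<in> B"
      using subspace_neg[OF sub(2) pK(2)[of a]] by simp
    then show "proj_along A B (proj_along K B a) = a"
      using \<open>a \<in> A\<close> sub assms(8) by (intro proj_along_eqI)
  next
    fix c k
    show "proj_along A B (scaleC J c k) = scaleC J c (proj_along A B k)"
      using assms by (simp add: proj_along_scaleC)
  qed
qed

section \<open>Graphs of isomorphisms\<close>

lemma complementary_graph_codomain:
  assumes "subspace M" "subspace N" "complementary M N" "T ` M \<subseteq> N"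
    and add: "\<And>x y. x \<in> M \<Longrightarrow> y \<in> M \<Longrightarrow> T (x + y) = T x + T y"
  shows "complementary N ((\<lambda>m. m + T m) ` M)"
proof (rule complementaryI)
  have "T 0 = 0"
    using add[of 0 0] subspace_0[OF assms(1)] by simp
  then show "0 \<in> (\<lambda>m. m + T m) ` M"
    using subspace_0[OF assms(1)] by (intro image_eqI[of _ _ 0]) simp_all
  show "0 \<in> N"
    using assms(2) by (rule subspace_0)
  fix z assume z: "z \<in> N" "z \<in> (\<lambda>m. m + T m) ` M"
  then obtain m where m: "m \<in> M" "z = m + T m"
    by blast
  have "z - T m \<in> N"
    using m assms(4) by (intro subspace_diff[OF assms(2) z(1)]) blast
  then have "m \<in> M \<inter> N"
    using m by simp
  then have "m = 0"
    using assms(3) unfolding complementary_def by blast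
  then show "z = 0"
    using m \<open>T 0 = 0\<close> by simp
next
  fix x
  obtain a b where "a \<in> M" "b \<in> N" "x = a + b"
    using assms(3) unfolding complementary_def by blast
  moreover from this have "b - T a \<in> N"
    using assms(4) by (intro subspace_diff[OF assms(2)]) blast+
  moreover have "a + T a \<in> (\<lambda>m. m + T m) ` M"
    using \<open>a \<in> M\<close> by (rule rev_image_eqI) simp
  moreover have "x = (b - T a) + (a + T a)"
    using \<open>x = a + b\<close> by simp
  ultimately show "\<exists>n\<in>N. \<exists>k\<in>(\<lambda>m. m + T m) ` M. x = n + k"
    by blast
qed

lemma complementary_graph_domain:
  assumes "subspace M" "subspace N" "complementary M N" "bij_betw T M N"
    and add: "\<And>x y. x \<in> M \<Longrightarrow> y \<in> M \<Longrightarrow> T (x + y) = T x + T y"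
  shows "complementary M ((\<lambda>m. m + T m) ` M)"
proof (rule complementaryI)
  have "T 0 = 0"
    using add[of 0 0] subspace_0[OF assms(1)] by simp
  then show "0 \<in> (\<lambda>m. m + T m) ` M"
    using subspace_0[OF assms(1)] by (intro image_eqI[of _ _ 0]) simp_all
  show "0 \<in> M"
    using assms(1) by (rule subspace_0)
  fix z assume z: "z \<in> M" "z \<in> (\<lambda>m. m + T m) ` M"
  then obtain m where m: "m \<in> M" "z = m + T m"
    by blast
  have "z - m \<in> M"
    by (rule subspace_diff[OF assms(1) z(1) m(1)])
  moreover have "T m \<in> N"
    using assms(4) m(1) by (auto simp: bij_betw_def)
  ultimately have "T m \<in> M \<inter> N"
    using m by simp
  then have "T m = T 0"
    using assms(3) \<open>T 0 = 0\<close> unfolding complementary_def by simp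
  then have "m = 0"
    by (rule inj_onD[OF bij_betw_imp_inj_on[OF assms(4)] _ m(1) subspace_0[OF assms(1)]])
  then show "z = 0"
    using m \<open>T 0 = 0\<close> by simp
next
  fix x
  obtain a b where "a \<in> M" "b \<in> N" "x = a + b"
    using assms(3) unfolding complementary_def by blast
  moreover from this obtain m where "m \<in> M" "b = T m"
    using assms(4) by (auto simp: bij_betw_def)
  moreover have "a - m \<in> M"
    using \<open>a \<in> M\<close> \<open>m \<in> M\<close> by (rule subspace_diff[OF assms(1)])
  moreover have "m + T m \<in> (\<lambda>m. m + T m) ` M"
    using \<open>m \<in> M\<close> by (rule rev_image_eqI) simp
  moreover have "x = (a - m) + (m + T m)"
    using \<open>x = a + b\<close> \<open>b = T m\<close> by simp
  ultimately show "\<exists>a\<in>M. \<exists>k\<in>(\<lambda>m. m + T m) ` M. x = a + k"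
    by blast
qed

lemma csubspace_graph:
  assumes "linear J" "csubspace J M"
    and add: "\<And>x y. x \<in> M \<Longrightarrow> y \<in> M \<Longrightarrow> T (x + y) = T x + T y"
    and hom: "\<And>c x. x \<in> M \<Longrightarrow> T (scaleC J c x) = scaleC J c (T x)"
  shows "csubspace J ((\<lambda>m. m + T m) ` M)"
  unfolding csubspace_def
proof (intro conjI ballI allI)
  have "0 \<in> M"
    using assms(2) by (simp add: csubspace_def)
  moreover from this have "T 0 = 0"
    using add[of 0 0] by simp
  ultimately show "0 \<in> (\<lambda>m. m + T m) ` M"
    by force
next
  fix x y assume "x \<in> (\<lambda>m. m + T m) ` M" "y \<in> (\<lambda>m. m + T m) ` M"
  then obtain m n where "m \<in> M" "n \<in> M" "x = m + T m" "y = n + T n"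
    by blast
  moreover from this have "m + n \<in> M"
    using assms(2) by (simp add: csubspace_def)
  ultimately show "x + y \<in> (\<lambda>m. m + T m) ` M"
    using add by (intro rev_image_eqI[of "m + n"]) (simp_all add: algebra_simps)
next
  fix c x assume "x \<in> (\<lambda>m. m + T m) ` M"
  then obtain m where "m \<in> M" "x = m + T m"
    by blast
  moreover from this have "scaleC J c m \<in> M"
    using assms(2) by (simp add: csubspace_def)
  ultimately show "scaleC J c x \<in> (\<lambda>m. m + T m) ` M"
    using hom assms(1) by (intro rev_image_eqI[of "scaleC J c m"]) (simp_all add: scaleC_add)
qed

lemma bounded_linear_comp_proj_along:
  fixes M N :: "'a::banach set"
  assumes "closed M" "closed N" "subspace M" "subspace N" "complementary M N"
    and add: "\<And>x y. x \<in> M \<Longrightarrow> y \<in> M \<Longrightarrow> T (x + y) = T x + T y"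
    and scale: "\<And>r x. x \<in> M \<Longrightarrow> T (r *\<^sub>R x) = r *\<^sub>R T x"
    and bound: "\<And>x. x \<in> M \<Longrightarrow> norm (T x) \<le> C * norm x"
  shows "bounded_linear (\<lambda>x. T (proj_along M N x))"
proof -
  let ?p = "proj_along M N"
  have p: "bounded_linear ?p"
    using assms(1-5) by (rule bounded_linear_proj_along)
  note p_mem = proj_along[OF assms(3-5)]
  obtain K where K: "\<And>x. norm (?p x) \<le> norm x * K"
    using bounded_linear.bounded[OF p] by blast
  show ?thesis
  proof (rule bounded_linear_intro)
    fix x y
    show "T (?p (x + y)) = T (?p x) + T (?p y)"
      using add p_mem by (simp add: linear_add bounded_linear.linear[OF p])
  next
    fix r x
    show "T (?p (r *\<^sub>R x)) = r *\<^sub>R T (?p x)"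
      using scale p_mem by (simp add: linear_scale bounded_linear.linear[OF p])
  next
    fix x
    have "norm (T (?p x)) \<le> \<bar>C\<bar> * norm (?p x)"
      using bound[OF p_mem(1)] mult_right_mono[OF abs_ge_self norm_ge_zero] by (rule order_trans)
    also have "\<dots> \<le> \<bar>C\<bar> * (norm x * K)"
      using K by (simp add: mult_left_mono)
    finally show "norm (T (?p x)) \<le> norm x * (\<bar>C\<bar> * K)"
      by (simp add: ac_simps)
  qed
qed

lemma closed_graph:
  fixes M N :: "'a::banach set"
  assumes "closed M" "closed N" "subspace M" "subspace N" "complementary M N" "T ` M \<subseteq> N"
    and add: "\<And>x y. x \<in> M \<Longrightarrow> y \<in> M \<Longrightarrow> T (x + y) = T x + T y"
    and scale: "\<And>r x. x \<in> M \<Longrightarrow> T (r *\<^sub>R x) = r *\<^sub>R T x"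
    and bound: "\<And>x. x \<in> M \<Longrightarrow> norm (T x) \<le> C * norm x"
  shows "closed ((\<lambda>m. m + T m) ` M)"
proof -
  let ?p = "proj_along M N"
  have "(\<lambda>m. m + T m) ` M = {x. T (?p x) = x - ?p x}"
  proof
    show "(\<lambda>m. m + T m) ` M \<subseteq> {x. T (?p x) = x - ?p x}"
    proof
      fix x assume "x \<in> (\<lambda>m. m + T m) ` M"
      then obtain m where "m \<in> M" "x = m + T m"
        by blast
      moreover from this have "?p x = m"
        using assms(6) by (intro proj_along_eqI assms(3-5)) auto
      ultimately show "x \<in> {x. T (?p x) = x - ?p x}"
        by simp
    qed
    show "{x. T (?p x) = x - ?p x} \<subseteq> (\<lambda>m. m + T m) ` M"
    proof
      fix x assume "x \<in> {x. T (?p x) = x - ?p x}"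
      then have "x = ?p x + T (?p x)"
        by simp
      then show "x \<in> (\<lambda>m. m + T m) ` M"
        using proj_along(1)[OF assms(3-5)] by (rule image_eqI)
    qed
  qed
  moreover have "bounded_linear (\<lambda>x. T (?p x))"
    by (rule bounded_linear_comp_proj_along[OF assms(1-5) add scale bound])
  moreover have "bounded_linear ?p"
    by (rule bounded_linear_proj_along[OF assms(1-5)])
  ultimately show ?thesis
    by (simp add: closed_Collect_eq linear_continuous_on continuous_on_diff continuous_on_id)
qed

lemma common_complement_if_cisomorphic:
  fixes M N :: "'a::banach set"
  assumes "linear J" "(UNIV :: 'a set) \<noteq> {0}"
    and "closed M" "csubspace J M" "closed N" "csubspace J N"
    and "complementary M N" "cisomorphic J M N"
  shows "\<exists>K. closed K \<and> csubspace J K \<and> K \<noteq> M \<and> K \<noteq> N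
           \<and> complementary M K \<and> complementary N K"
proof -
  have sub: "subspace M" "subspace N"
    using assms(4,6) by (simp_all add: csubspace_imp_subspace)
  obtain T C where bij: "bij_betw T M N"
    and add: "\<And>x y. x \<in> M \<Longrightarrow> y \<in> M \<Longrightarrow> T (x + y) = T x + T y"
    and hom: "\<And>c x. x \<in> M \<Longrightarrow> T (scaleC J c x) = scaleC J c (T x)"
    and bound: "\<And>x. x \<in> M \<Longrightarrow> norm (T x) \<le> C * norm x"
    using assms(8) unfolding cisomorphic_def by metis
  have "T ` M \<subseteq> N"
    using bij by (simp add: bij_betw_def)
  have scale: "T (r *\<^sub>R x) = r *\<^sub>R T x" if "x \<in> M" for r x
    using hom[OF that, of "complex_of_real r"] by simp
  have "M \<noteq> {0}" "N \<noteq> {0}"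
    using complementary_equicard_nonzero[OF assms(7) bij_betw_same_card[OF bij] assms(2)]
      complementary_equicard_nonzero[OF complementary_sym[OF assms(7)]
        bij_betw_same_card[OF bij, symmetric] assms(2)]
    by simp_all
  define K where "K = (\<lambda>m. m + T m) ` M"
  have "complementary M K"
    unfolding K_def using sub assms(7) bij add by (rule complementary_graph_domain)
  moreover have "complementary N K"
    unfolding K_def using sub assms(7) \<open>T ` M \<subseteq> N\<close> add by (rule complementary_graph_codomain)
  moreover have "closed K"
    unfolding K_def by (rule closed_graph[OF assms(3,5) sub assms(7) \<open>T ` M \<subseteq> N\<close> add scale bound])
  moreover have "csubspace J K"
    unfolding K_def using assms(1,4) add hom by (rule csubspace_graph)
  moreover have "K \<noteq> M" "K \<noteq> N"
    using calculation(1,2) \<open>M \<noteq> {0}\<close> \<open>N \<noteq> {0}\<close> unfolding complementary_def by force+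
  ultimately show ?thesis
    by blast
qed

theorem proposition5p1:
  fixes J :: "'a::banach \<Rightarrow> 'a" and M N :: "'a set"
  assumes "complex_banach_structure J"
    and "(UNIV :: 'a set) \<noteq> {0}"
    and "closed M" "csubspace J M" "closed N" "csubspace J N"
    and "complementary M N"
  shows "(cisomorphic J M N \<longleftrightarrow>
           (\<exists>K. closed K \<and> csubspace J K \<and> K \<noteq> M \<and> K \<noteq> N
                \<and> complementary M K \<and> complementary N K))
       \<and> (\<forall>K. closed K \<and> csubspace J K \<and> K \<noteq> M \<and> K \<noteq> N
                \<and> complementary M K \<and> complementary N K
             \<longrightarrow> cisomorphic J K M \<and> cisomorphic J K N)"
proof -
  have J: "linear J"
    using assms(1) by (simp add: complex_banach_structure_def)
  have iso: "cisomorphic J M N \<and> cisomorphic J K M \<and> cisomorphic J K N"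
    if "closed K" "csubspace J K" "complementary M K" "complementary N K" for K
  proof (intro conjI)
    show "cisomorphic J M N"
      by (rule cisomorphic_common_complement[OF J assms(5) that(1) assms(3) assms(6) that(2) assms(4)
            that(4,3)])
    show "cisomorphic J K M"
      by (rule cisomorphic_common_complement[OF J assms(3,5) that(1) assms(4,6) that(2) assms(7)
            complementary_sym[OF that(4)]])
    show "cisomorphic J K N"
      by (rule cisomorphic_common_complement[OF J assms(5,3) that(1) assms(6,4) that(2)
            complementary_sym[OF assms(7)] complementary_sym[OF that(3)]])
  qed
  show ?thesis
  proof (intro conjI iffI allI impI)
    assume "cisomorphic J M N"
    then show "\<exists>K. closed K \<and> csubspace J K \<and> K \<noteq> M \<and> K \<noteq> N
                \<and> complementary M K \<and> complementary N K"
      by (rule common_complement_if_cisomorphic[OF J assms(2-7)])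
  qed (use iso in blast)+
qed

end
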